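(* Let $r\ge 2$, let $\lambda,\mu\in\Lambda$ with $\lambda\sim_e\mu$, and let $s\in\mathbb{Z}$. Then $\eta(\lambda,s)\xrightarrow{r}_1\eta(\mu,s)$ (as elements of $\mathcal{A}_r^e$) if and only if $\Phi_r(\lambda,s)\xrightarrow{e}_1\Phi_r(\mu,s)$ (as elements of $\mathcal{A}_e^r$).
   Context: Fix an integer $e\ge 2$. A partition is a weakly decreasing sequence $\lambda=(\lambda_1,\lambda_2,\dots)$ of non-negative integers with finite sum $|\lambda|$; $\Lambda$ denotes the set of partitions and $\Lambda^{(m)}$ the set of $m$-multipartitions, i.e. $m$-tuples $\boldsymbol\lambda=(\lambda^{(1)},\dots,\lambda^{(m)})$ of partitions, with $|\boldsymbol\lambda|=\sum_k|\lambda^{(k)}|$. A $\beta$-set is a subset $B\subseteq\mathbb{Z}$ containing all sufficiently small integers and no sufficiently large ones. For $\lambda\in\Lambda$ and $s\in\mathbb{Z}$ set $B_s(\lambda)=\{\lambda_i-i+s : i\ge 1\}$; every $\beta$-set equals $B_s(\lambda)$ for a unique pair $(\lambda,s)$. For $N\ge 2$ let $\mathcal{A}_N=\Lambda\times\mathbb{Z}$ (abacus configurations with $N$ runners) and $\mathcal{A}_N^m=\Lambda^{(m)}\times\mathbb{Z}^m$, where $(\boldsymbol\lambda,\mathbf{s})$ is identified with the $m$-tuple of $\beta$-sets $(B_{s_1}(\lambda^{(1)}),\dots,B_{s_m}(\lambda^{(m)}))$. The map $\eta$: for $(\lambda,s)\in\mathcal{A}_e$ with $B=B_s(\lambda)$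 and $0\le i<e$, the set $C_i=\{(b-i)/e : b\in B,\ b\equiv i \bmod e\}$ is a $\beta$-set, so $C_i=B_{t_i}(\rho_i)$ for a unique $(\rho_i,t_i)\in\Lambda\times\mathbb{Z}$; set $\eta(\lambda,s)=((\rho_0,\dots,\rho_{e-1}),(t_0,\dots,t_{e-1}))\in\Lambda^{(e)}\times\mathbb{Z}^e$, which we also regard as an element of $\mathcal{A}_r^e$. The $e$-weight of $\lambda$ is $\mathrm{wt}(\lambda)=\sum_i|\rho_i|$. For $\lambda,\mu\in\Lambda$ write $\lambda\sim_e\mu$ if $|\lambda|=|\mu|$, $\mathrm{wt}(\lambda)=\mathrm{wt}(\mu)$ and $\lambda,\mu$ have the same $e$-core (equivalently, $(\lambda,s)$ and $(\mu,s)$ have the same $t$-component under $\eta$ and the same weight, for any $s$). Moves on $\mathcal{A}_N^m$, for $(\boldsymbol\lambda,\mathbf{s}),(\boldsymbol\mu,\mathbf{s})$ with the same $\mathbf{s}$: (1) $(\boldsymbol\lambda,\mathbf{s})\xrightarrow{N}_1(\boldsymbol\mu,\mathbf{s})$ if for some $k_1,k_2\in\{1,\dots,m\}$ the tuple of $\beta$-sets of $(\boldsymbol\mu,\mathbf{s})$ is obtained from that of $(\boldsymbol\lambda,\mathbf{s})$ by replacing an element $b$ of the $k_1$-th $\beta$-set by $b-N$ (not previously in that set) and then replacing an element $c$ of the $k_2$-th $\beta$-set by $c+N$ (not previously in that set). (2) $(\boldsymbol\lambda,\mathbf{s})\xrightarrow{N}_2(\boldsymbol\mu,\mathbf{s})$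 if there exist $k_1,k_2\in\{1,\dots,m\}$, $b_1,b_2\in\mathbb{Z}$ with $b_1\equiv b_2\bmod N$, and $h>0$, such that $b_1\in B_{s_{k_1}}(\lambda^{(k_1)})$, $b_1+h\notin B_{s_{k_1}}(\lambda^{(k_1)})$, $b_2\notin B_{s_{k_2}}(\lambda^{(k_2)})$, $b_2+h\in B_{s_{k_2}}(\lambda^{(k_2)})$, and the $\beta$-sets of $(\boldsymbol\mu,\mathbf{s})$ agree with those of $(\boldsymbol\lambda,\mathbf{s})$ except that $b_1$ is replaced by $b_1+h$ in component $k_1$ and $b_2+h$ is replaced by $b_2$ in component $k_2$. Uglov's map: for $1\le k\le r$ define $\psi_k:\mathbb{Z}\to\mathbb{Z}$ by $\psi_k(ae+i)=((a+1)r-k)e+i$ for $a\in\mathbb{Z}$, $0\le i<e$. For $(\boldsymbol\lambda,\mathbf{s})\in\mathcal{A}_e^r$ the set $B=\bigsqcup_{k=1}^r\psi_k(B_{s_k}(\lambda^{(k)}))$ is a $\beta$-set, and $\Psi_r(\boldsymbol\lambda,\mathbf{s})$ is the unique $(\tilde\lambda,\tilde s)\in\mathcal{A}_e$ with $B_{\tilde s}(\tilde\lambda)=B$. $\Psi_r:\mathcal{A}_e^r\to\mathcal{A}_e$ is a bijection; $\Phi_r=\Psi_r^{-1}$. *)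

theory Defs
  imports Main
begin

text \<open>Partitions are represented as weakly decreasing lists of positive naturals;
  lambda_i (i >= 1) is the (i-1)-th list entry, or 0 beyond the length.\<close>

type_synonym partition = "nat list"

definition is_part :: "partition \<Rightarrow> bool" where
  "is_part lam \<longleftrightarrow> sorted_wrt (\<ge>) lam \<and> (\<forall>x\<in>set lam. 0 < x)"

definition part_at :: "partition \<Rightarrow> nat \<Rightarrow> nat" where
  "part_at lam i = (if 1 \<le> i \<and> i \<le> length lam then lam ! (i - 1) else 0)"

definition psize :: "partition \<Rightarrow> nat" where
  "psize lam = sum_list lam"

definition Bset :: "int \<Rightarrow> partition \<Rightarrow> int set" where
  "Bset s lam = {int (part_at lam i) - int i + s | i. 1 \<le> i}"

definition is_beta_set :: "int set \<Rightarrow> bool" where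
  "is_beta_set B \<longleftrightarrow> (\<exists>n. \<forall>x\<le>n. x \<in> B) \<and> (\<exists>n. \<forall>x\<ge>n. x \<notin> B)"

definition pair_of :: "int set \<Rightarrow> partition \<times> int" where
  "pair_of B = (THE p. is_part (fst p) \<and> Bset (snd p) (fst p) = B)"

text \<open>Configurations: A_N = Lambda x Z and A_N^m = Lambda^(m) x Z^m
  (multipartitions and charges as lists of length m, component k is list index k-1).
  The number of runners N plays no role in the carrier.\<close>
type_synonym config = "partition \<times> int"
type_synonym mconfig = "partition list \<times> int list"

definition in_A :: "nat \<Rightarrow> mconfig \<Rightarrow> bool" where
  "in_A m X \<longleftrightarrow> length (fst X) = m \<and> length (snd X) = m \<and> (\<forall>lam\<in>set (fst X). is_part lam)"

definition bsets :: "mconfig \<Rightarrow> int set list" where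
  "bsets X = map (\<lambda>k. Bset (snd X ! k) (fst X ! k)) [0..<length (fst X)]"

definition move1 :: "nat \<Rightarrow> nat \<Rightarrow> mconfig \<Rightarrow> mconfig \<Rightarrow> bool" where
  "move1 N m X Y \<longleftrightarrow> in_A m X \<and> in_A m Y \<and> snd X = snd Y \<and>
     (\<exists>k1<m. \<exists>k2<m. \<exists>b c.
        let B = bsets X; B' = B[k1 := insert (b - int N) (B ! k1 - {b})] in
        b \<in> B ! k1 \<and> b - int N \<notin> B ! k1 \<and>
        c \<in> B' ! k2 \<and> c + int N \<notin> B' ! k2 \<and>
        bsets Y = B'[k2 := insert (c + int N) (B' ! k2 - {c})])"

definition eta :: "nat \<Rightarrow> config \<Rightarrow> mconfig" where
  "eta e X = (let B = Bset (snd X) (fst X);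
                  C = (\<lambda>i::nat. {(b - int i) div int e | b. b \<in> B \<and> b mod int e = int i});
                  p = (\<lambda>i. pair_of (C i))
              in (map (\<lambda>i. fst (p i)) [0..<e], map (\<lambda>i. snd (p i)) [0..<e]))"

definition weight :: "nat \<Rightarrow> partition \<Rightarrow> nat" where
  "weight e lam = sum_list (map psize (fst (eta e (lam, 0))))"

text \<open>The e-core: the partition whose abacus (charge 0) has the same runner charges
  and empty quotient.\<close>
definition ecore :: "nat \<Rightarrow> partition \<Rightarrow> partition" where
  "ecore e lam = (THE kap. is_part kap \<and>
       eta e (kap, 0) = (replicate e [], snd (eta e (lam, 0))))"

definition sim_e :: "nat \<Rightarrow> partition \<Rightarrow> partition \<Rightarrow> bool" where
  "sim_e e lam mu \<longleftrightarrow> psize lam = psize mu \<and> weight e lam = weight e mu \<and> ecore e lam = ecore e mu"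

definition psi :: "nat \<Rightarrow> nat \<Rightarrow> nat \<Rightarrow> int \<Rightarrow> int" where
  "psi e r k b = ((b div int e + 1) * int r - int k) * int e + b mod int e"

definition Psi :: "nat \<Rightarrow> nat \<Rightarrow> mconfig \<Rightarrow> config" where
  "Psi e r X = pair_of (\<Union>k\<in>{1..r}. psi e r k ` Bset (snd X ! (k - 1)) (fst X ! (k - 1)))"

definition Phi :: "nat \<Rightarrow> nat \<Rightarrow> config \<Rightarrow> mconfig" where
  "Phi e r Z = (THE X. in_A r X \<and> Psi e r X = Z)"

end

theory Submission
  imports Defs
begin

text \<open>Both eta and Phi_r split the beta-set B of (lambda, s) over runners by a bijection
  between (runner, level) pairs and the integers that is increasing on each runner: eta sends
  level q of runner i to q e + i, Phi_r sends level q of runner k to psi_(k+1)(q). In both cases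
  going down N levels on a runner (N = r for eta, N = e for Phi_r) means going down r e
  positions in B. So a move by N on either side is the same thing as moving one bead of B down
  by r e and one bead up by r e; the charges come for free, since moving a bead to a free
  position never changes the charge.\<close>

lemma part_at_Cons_Suc: "1 \<le> j \<Longrightarrow> part_at (a # l) (Suc j) = part_at l j"
  by (auto simp: part_at_def nth_Cons')

lemma part_at_beyond: "length l < i \<Longrightarrow> part_at l i = 0"
  by (simp add: part_at_def)

lemma part_at_antimono:
  assumes "is_part l" "1 \<le> i" "i \<le> j"
  shows "part_at l j \<le> part_at l i"
proof (cases "j \<le> length l \<and> i \<noteq> j")
  case True
  then have "l ! (j - 1) \<le> l ! (i - 1)"
    using assms sorted_wrt_nth_less[of "(\<ge>)" l "i - 1" "j - 1"] by (auto simp: is_part_def)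
  then show ?thesis using assms True by (auto simp: part_at_def)
qed (auto simp: part_at_def)

lemma part_at_pos:
  assumes "is_part l" "1 \<le> i" "i \<le> length l"
  shows "0 < part_at l i"
  using assms by (auto simp: part_at_def is_part_def)

lemma part_at_le_sum_list: "part_at l i \<le> sum_list l"
  by (auto simp: part_at_def elem_le_sum_list)

lemma part_eqI:
  assumes "is_part l" "is_part l'" "\<And>i. 1 \<le> i \<Longrightarrow> part_at l i = part_at l' i"
  shows "l = l'"
proof -
  have "\<not> length l < length l'" if "is_part l'" "\<And>i. 1 \<le> i \<Longrightarrow> part_at l i = part_at l' i"
    for l l' :: partition
    using that part_at_pos[of l' "length l'"] part_at_beyond[of l "length l'"] by fastforce
  then have len: "length l = length l'" using assms by (metis linorder_neqE_nat)
  have "l ! k = l' ! k" if "k < length l" for k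
    using assms(3)[of "Suc k"] that len by (simp add: part_at_def)
  then show ?thesis using len by (simp add: nth_equalityI)
qed

lemma Bset_eq_image: "Bset s l = (\<lambda>i. int (part_at l i) - int i + s) ` {1..}"
  by (auto simp: Bset_def)

lemma Bset_decreasing:
  assumes "is_part l" "1 \<le> i" "i < j"
  shows "int (part_at l j) - int j + s < int (part_at l i) - int i + s"
  using part_at_antimono[OF assms(1,2), of j] assms(3) by linarith

lemma decreasing_eq_of_image_eq:
  fixes f g :: "nat \<Rightarrow> int"
  assumes f: "\<And>i j. 1 \<le> i \<Longrightarrow> i < j \<Longrightarrow> f j < f i"
    and g: "\<And>i j. 1 \<le> i \<Longrightarrow> i < j \<Longrightarrow> g j < g i"
    and image: "f ` {1..} = g ` {1..}"
    and "1 \<le> n"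
  shows "f n = g n"
  using \<open>1 \<le> n\<close>
proof (induction n rule: less_induct)
  case (less n)
  \<comment> \<open>f n = g j for some j, and j < n is excluded by the induction hypothesis;
    hence f n \<le> g n, and symmetrically.\<close>
  have "f n \<le> g n" if f: "\<And>i j. 1 \<le> i \<Longrightarrow> i < j \<Longrightarrow> f j < f i"
    and g: "\<And>i j. 1 \<le> i \<Longrightarrow> i < j \<Longrightarrow> g j < g i"
    and image: "f ` {1..} = g ` {1..}" and IH: "\<And>j. 1 \<le> j \<Longrightarrow> j < n \<Longrightarrow> f j = g j"
    for f g :: "nat \<Rightarrow> int"
  proof -
    have "f n \<in> g ` {1..}" using image less.prems by auto
    then obtain j where j: "1 \<le> j" "f n = g j" by auto
    have "\<not> j < n" using IH[of j] f[of j n] j by auto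
    then show ?thesis using g[of n j] j less.prems by (cases "j = n") auto
  qed
  from this[OF f g image] this[OF g f image[symmetric]] show ?case
    using less.IH less.prems by fastforce
qed

lemma Bset_inject:
  assumes "is_part l" "is_part l'" "Bset s l = Bset s' l'"
  shows "l = l' \<and> s = s'"
proof -
  have eq: "int (part_at l n) - int n + s = int (part_at l' n) - int n + s'" if "1 \<le> n" for n
    by (rule decreasing_eq_of_image_eq[OF _ _ _ that])
      (use Bset_decreasing[OF assms(1)] Bset_decreasing[OF assms(2)] assms(3) in \<open>auto simp: Bset_eq_image\<close>)
  have "s = s'"
    using eq[of "Suc (max (length l) (length l'))"] by (simp add: part_at_beyond)
  then show ?thesis using eq part_eqI[OF assms(1,2)] by simp
qed

lemma is_beta_set_Bset: "is_beta_set (Bset s l)"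
  unfolding is_beta_set_def
proof
  show "\<exists>n. \<forall>x\<le>n. x \<in> Bset s l"
  proof (intro exI allI impI)
    fix x assume "x \<le> s - int (length l) - 1"
    then show "x \<in> Bset s l"
      unfolding Bset_def by (intro CollectI exI[of _ "nat (s - x)"]) (auto simp: part_at_beyond)
  qed
  show "\<exists>n. \<forall>x\<ge>n. x \<notin> Bset s l"
  proof (intro exI allI impI notI)
    fix x assume "s + int (sum_list l) \<le> x" "x \<in> Bset s l"
    then obtain i where "1 \<le> i" "x = int (part_at l i) - int i + s" by (auto simp: Bset_def)
    then show False using part_at_le_sum_list[of l i] \<open>s + int (sum_list l) \<le> x\<close> by linarith
  qed
qed

lemma Bset_Nil: "Bset s [] = {x. x < s}"
  unfolding Bset_def part_at_def
  by (auto intro!: exI[of _ "nat (s - _)"])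

lemma Bset_Cons: "Bset (s + 1) (a # l) = insert (int a + s) (Bset s l)"
proof -
  have from_one: "{1::nat..} = insert 1 (Suc ` {1..})"
    by (metis Un_commute Un_empty_left Un_insert_right atLeast_Suc_greaterThan
        image_add_atLeast ivl_disj_un_singleton(1) plus_1_eq_Suc)
  have tail: "(\<lambda>i. int (part_at (a # l) (Suc i)) - int (Suc i) + (s + 1)) ` {1..} = Bset s l"
    unfolding Bset_eq_image by (rule image_cong) (auto simp: part_at_Cons_Suc)
  show ?thesis
    unfolding Bset_eq_image[of "s + 1"] by (subst from_one) (simp only: image_insert image_image tail, simp add: part_at_def)
qed

lemma Bset_of_finite_above:
  assumes "finite F" "F \<subseteq> {M..}"
  obtains l s where "is_part l" "Bset s l = {x. x < M} \<union> F"
  using assms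
proof (induction F arbitrary: thesis rule: finite_linorder_max_induct)
  case empty
  show ?case by (rule empty.prems(1)[of "[]" M]) (auto simp: Bset_Nil is_part_def)
next
  case (insert b A)
  obtain l s where ls: "is_part l" "Bset s l = {x. x < M} \<union> A"
    using insert.IH insert.prems(2) by blast
  have "M \<le> b" using insert.prems(2) by simp
  then have "\<forall>x\<in>Bset s l. x < b" using ls(2) insert.hyps(2) by auto
  moreover have "int (part_at l 1) - 1 + s \<in> Bset s l" by (auto simp: Bset_def intro!: exI[of _ 1])
  ultimately have top: "int (part_at l 1) - 1 + s < b" by blast
  show ?case
  proof (cases "b = s")
    case True
    then have "l = []" using top part_at_pos[OF ls(1), of 1] by (cases l) auto
    then have "Bset (s + 1) [] = insert b (Bset s l)" using True by (auto simp: Bset_Nil)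
    then show ?thesis using insert.prems(1)[of "[]" "s + 1"] ls(2) by (simp add: is_part_def)
  next
    case False
    define a where "a = nat (b - s)"
    have a: "0 < a" "int a + s = b" "part_at l 1 \<le> a" using top False by (auto simp: a_def)
    have "y \<le> a" if "y \<in> set l" for y
      using that a(3) ls(1) by (cases l) (auto simp: is_part_def part_at_def)
    then have "is_part (a # l)" using ls(1) a(1) by (auto simp: is_part_def)
    moreover have "Bset (s + 1) (a # l) = {x. x < M} \<union> insert b A"
      using Bset_Cons[of s a l] a(2) ls(2) by auto
    ultimately show ?thesis by (rule insert.prems(1))
  qed
qed

lemma is_beta_set_obtains_Bset:
  assumes "is_beta_set B"
  obtains l s where "is_part l" "Bset s l = B"
proof -
  obtain n m where n: "\<forall>x\<le>n. x \<in> B" and m: "\<forall>x\<ge>m. x \<notin> B"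
    using assms by (auto simp: is_beta_set_def)
  have "x \<le> m" if "x \<in> B" for x using m that by (meson linorder_linear)
  then have "B \<inter> {n..} \<subseteq> {n..m}" by auto
  then have "finite (B \<inter> {n..})" using finite_subset by blast
  moreover have "{x. x < n} \<union> (B \<inter> {n..}) = B" using n by auto
  ultimately show ?thesis
    using Bset_of_finite_above[of "B \<inter> {n..}" n] that by auto
qed

lemma pair_of_Bset: "is_part l \<Longrightarrow> pair_of (Bset s l) = (l, s)"
  unfolding pair_of_def by (rule the_equality) (auto dest: Bset_inject)

lemma Bset_pair_of:
  assumes "is_beta_set B"
  shows "is_part (fst (pair_of B))" "Bset (snd (pair_of B)) (fst (pair_of B)) = B"
proof -
  obtain l s where ls: "is_part l" "Bset s l = B" using is_beta_set_obtains_Bset[OF assms] .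
  then have "pair_of B = (l, s)" using pair_of_Bset by blast
  then show "is_part (fst (pair_of B))" "Bset (snd (pair_of B)) (fst (pair_of B)) = B"
    using ls by simp_all
qed

lemma card_Bset_above:
  assumes "is_part l" "M \<le> s - int (length l)"
  shows "card (Bset s l \<inter> {M..}) = nat (s - M)"
proof -
  let ?f = "\<lambda>i. int (part_at l i) - int i + s"
  have "?f i \<ge> M \<longleftrightarrow> i \<le> nat (s - M)" if "1 \<le> i" for i
  proof (cases "i \<le> length l")
    case True
    then show ?thesis using part_at_pos[OF assms(1) that True] assms(2) by linarith
  qed (use assms(2) part_at_beyond[of l i] in auto)
  then have "Bset s l \<inter> {M..} = ?f ` {1..nat (s - M)}"
    unfolding Bset_eq_image by auto
  moreover have "inj_on ?f {1..nat (s - M)}"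
  proof (rule inj_onI)
    fix i j assume "i \<in> {1..nat (s - M)}" "j \<in> {1..nat (s - M)}" "?f i = ?f j"
    then show "i = j" using Bset_decreasing[OF assms(1), of i j s] Bset_decreasing[OF assms(1), of j i s]
      by (cases i j rule: linorder_cases) auto
  qed
  ultimately show ?thesis by (simp add: card_image)
qed

lemma finite_beta_set_above:
  assumes "is_beta_set B"
  shows "finite (B \<inter> {M..})"
proof -
  obtain n where "\<forall>x\<ge>n. x \<notin> B" using assms by (auto simp: is_beta_set_def)
  then have "x \<le> n" if "x \<in> B" for x using that by (meson linorder_linear)
  then have "B \<inter> {M..} \<subseteq> {M..n}" by auto
  then show ?thesis using finite_subset by blast
qed

text \<open>For M low enough, B_s(lambda) has exactly s - M beads at positions \<ge> M; moving one
  bead to a free position keeps this number, hence the charge.\<close>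

lemma Bset_move_bead_charge:
  assumes "is_part l" "is_part l'" "Bset t' l' = insert b' (Bset t l - {b})"
    and "b \<in> Bset t l" "b' \<notin> Bset t l"
  shows "t' = t"
proof -
  define M where "M = min (min (t - int (length l)) (t' - int (length l'))) (min b b')"
  have "M \<le> b" "M \<le> b'" by (simp_all add: M_def)
  then have eq: "Bset t' l' \<inter> {M..} = insert b' ((Bset t l \<inter> {M..}) - {b})"
    and mem: "b \<in> Bset t l \<inter> {M..}" "b' \<notin> Bset t l \<inter> {M..}"
    using assms(3-5) by auto
  have "card (insert b' (S - {b})) = card S" if "finite S" "b \<in> S" "b' \<notin> S" for S
    using that by (simp add: card_insert_disjoint card_Suc_Diff1 del: card_Diff_insert card_Diff_singleton)
  from this[OF finite_beta_set_above[OF is_beta_set_Bset] mem]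
  have "card (Bset t' l' \<inter> {M..}) = card (Bset t l \<inter> {M..})" unfolding eq .
  moreover have "M \<le> t - int (length l)" "M \<le> t' - int (length l')" by (simp_all add: M_def)
  ultimately show ?thesis using card_Bset_above[OF assms(1)] card_Bset_above[OF assms(2)] by simp
qed

lemma is_beta_set_move_bead:
  assumes "is_beta_set B"
  shows "is_beta_set (insert b' (B - {b}))"
proof -
  obtain n m where n: "\<forall>x\<le>n. x \<in> B" and m: "\<forall>x\<ge>m. x \<notin> B"
    using assms by (auto simp: is_beta_set_def)
  have "\<forall>x\<le>min n (b - 1). x \<in> insert b' (B - {b})" "\<forall>x\<ge>max m (b' + 1). x \<notin> insert b' (B - {b})"
    using n m by auto
  then show ?thesis unfolding is_beta_set_def by blast
qed

lemma charge_move_bead: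
  assumes "is_beta_set B" "b \<in> B" "b' \<notin> B"
  shows "snd (pair_of (insert b' (B - {b}))) = snd (pair_of B)"
proof -
  let ?B' = "insert b' (B - {b})"
  have "is_beta_set ?B'" using is_beta_set_move_bead[OF assms(1)] .
  note B' = Bset_pair_of[OF this] and B = Bset_pair_of[OF assms(1)]
  show ?thesis by (rule Bset_move_bead_charge[OF B(1) B'(1)]) (use B(2) B'(2) assms in simp_all)
qed

definition slide :: "int \<Rightarrow> int set \<Rightarrow> int set \<Rightarrow> bool" where
  "slide d B B' \<longleftrightarrow> (\<exists>b. b \<in> B \<and> b + d \<notin> B \<and> B' = insert (b + d) (B - {b}))"

definition slide_some :: "int \<Rightarrow> nat \<Rightarrow> int set list \<Rightarrow> int set list \<Rightarrow> bool" where
  "slide_some d m L L' \<longleftrightarrow> (\<exists>k<m. \<exists>B. slide d (L ! k) B \<and> L' = L[k := B])"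

definition move1_sets :: "nat \<Rightarrow> nat \<Rightarrow> int set list \<Rightarrow> int set list \<Rightarrow> bool" where
  "move1_sets N m L L' \<longleftrightarrow> (\<exists>L1. slide_some (- int N) m L L1 \<and> slide_some (int N) m L1 L')"

definition move1_set :: "int \<Rightarrow> int set \<Rightarrow> int set \<Rightarrow> bool" where
  "move1_set M B B' \<longleftrightarrow> (\<exists>B1. slide (- M) B B1 \<and> slide M B1 B')"

definition config_of_sets :: "int set list \<Rightarrow> mconfig" where
  "config_of_sets L = (map (\<lambda>B. fst (pair_of B)) L, map (\<lambda>B. snd (pair_of B)) L)"

lemma move1_iff_move1_sets:
  "move1 N m X Y \<longleftrightarrow> in_A m X \<and> in_A m Y \<and> snd X = snd Y \<and> move1_sets N m (bsets X) (bsets Y)"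
  unfolding move1_def move1_sets_def slide_some_def slide_def Let_def
  by auto

lemma slide_charge:
  assumes "is_beta_set B" "slide d B B'"
  shows "is_beta_set B'" "snd (pair_of B') = snd (pair_of B)"
  using assms is_beta_set_move_bead charge_move_bead by (auto simp: slide_def)

lemma slide_some_charges:
  assumes "slide_some d m L L'" "\<forall>B\<in>set L. is_beta_set B"
  shows "\<forall>B\<in>set L'. is_beta_set B"
    and "map (\<lambda>B. snd (pair_of B)) L' = map (\<lambda>B. snd (pair_of B)) L"
proof -
  obtain k B where k: "k < m" "slide d (L ! k) B" and L': "L' = L[k := B]"
    using assms(1) by (auto simp: slide_some_def)
  show "\<forall>B\<in>set L'. is_beta_set B"
    using assms(2) slide_charge(1)[OF _ k(2)] set_update_subset_insert[of L k B]
    by (cases "k < length L") (auto simp: L' list_update_beyond)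
  show "map (\<lambda>B. snd (pair_of B)) L' = map (\<lambda>B. snd (pair_of B)) L"
  proof (rule nth_equalityI)
    fix i assume "i < length (map (\<lambda>B. snd (pair_of B)) L')"
    then show "map (\<lambda>B. snd (pair_of B)) L' ! i = map (\<lambda>B. snd (pair_of B)) L ! i"
      using assms(2) slide_charge(2)[OF _ k(2)] by (cases "i = k") (auto simp: L')
  qed (simp add: L')
qed

lemma in_A_config_of_sets:
  "\<forall>B\<in>set L. is_beta_set B \<Longrightarrow> in_A (length L) (config_of_sets L)"
  by (auto simp: in_A_def config_of_sets_def Bset_pair_of)

lemma bsets_config_of_sets:
  "\<forall>B\<in>set L. is_beta_set B \<Longrightarrow> bsets (config_of_sets L) = L"
  by (auto simp: bsets_def config_of_sets_def Bset_pair_of intro: nth_equalityI)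

lemma config_of_sets_bsets:
  assumes "in_A m X"
  shows "config_of_sets (bsets X) = X"
proof -
  have len: "length (fst X) = m" "length (snd X) = m" and parts: "\<forall>l\<in>set (fst X). is_part l"
    using assms by (simp_all add: in_A_def)
  have "pair_of (bsets X ! k) = (fst X ! k, snd X ! k)" if "k < m" for k
    using that len parts by (simp add: bsets_def pair_of_Bset)
  then show ?thesis using len
    by (auto simp: config_of_sets_def bsets_def intro!: nth_equalityI prod_eqI)
qed

text \<open>The charges need not be compared: a move of beads preserves them automatically.\<close>

lemma move1_config_of_sets_iff:
  assumes "length L = m" "length L' = m" "\<forall>B\<in>set L. is_beta_set B" "\<forall>B\<in>set L'. is_beta_set B"
  shows "move1 N m (config_of_sets L) (config_of_sets L') \<longleftrightarrow> move1_sets N m L L'"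
proof -
  have "snd (config_of_sets L') = snd (config_of_sets L)" if "move1_sets N m L L'"
    using that slide_some_charges[OF _ assms(3)] slide_some_charges(2)
    by (auto simp: move1_sets_def config_of_sets_def)
  then show ?thesis
    using in_A_config_of_sets[OF assms(3)] in_A_config_of_sets[OF assms(4)] assms(1,2)
    by (auto simp: move1_iff_move1_sets bsets_config_of_sets assms(3,4))
qed

lemma strict_mono_int_shift_bounds:
  fixes f :: "int \<Rightarrow> int"
  assumes "strict_mono f"
  shows "0 \<le> x \<Longrightarrow> f 0 + x \<le> f x" and "x \<le> 0 \<Longrightarrow> f x \<le> f 0 + x"
proof -
  have succ: "f i + 1 \<le> f (i + 1)" for i using strict_monoD[OF assms, of i "i + 1"] by simp
  show "0 \<le> x \<Longrightarrow> f 0 + x \<le> f x"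
  proof (induction x rule: int_ge_induct)
    case (step i) then show ?case using succ[of i] by linarith
  qed simp
  show "x \<le> 0 \<Longrightarrow> f x \<le> f 0 + x"
  proof (induction x rule: int_le_induct)
    case (step i) then show ?case using succ[of "i - 1"] by simp
  qed simp
qed

lemma is_beta_set_vimage:
  fixes f :: "int \<Rightarrow> int"
  assumes "strict_mono f" "is_beta_set B"
  shows "is_beta_set (f -` B)"
proof -
  obtain n m where n: "\<forall>x\<le>n. x \<in> B" and m: "\<forall>x\<ge>m. x \<notin> B"
    using assms(2) by (auto simp: is_beta_set_def)
  have "\<forall>q\<le>min 0 (n - f 0). f q \<in> B"
    using n strict_mono_int_shift_bounds(2)[OF assms(1)] by force
  moreover have "\<forall>q\<ge>max 0 (m - f 0). f q \<notin> B"
    using m strict_mono_int_shift_bounds(1)[OF assms(1)] by force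
  ultimately show ?thesis unfolding is_beta_set_def vimage_def by blast
qed

text \<open>An abacus with m runners: place k q is the position of the bead slot at level q of
  runner k, and going one level down the runner (by N) goes M positions down the abacus.\<close>

locale abacus_runners =
  fixes place :: "nat \<Rightarrow> int \<Rightarrow> int" and m N :: nat and M :: int
  assumes place_shift: "k < m \<Longrightarrow> place k (q + int N) = place k q + M"
    and place_inject: "k < m \<Longrightarrow> k' < m \<Longrightarrow> place k q = place k' q' \<Longrightarrow> k = k' \<and> q = q'"
    and place_surj: "\<exists>k<m. \<exists>q. place k q = y"
    and place_strict_mono: "k < m \<Longrightarrow> strict_mono (place k)"
begin

definition runners :: "int set \<Rightarrow> int set list" where
  "runners B = map (\<lambda>k. place k -` B) [0..<m]"

lemma length_runners [simp]: "length (runners B) = m"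
  by (simp add: runners_def)

lemma runners_nth [simp]: "k < m \<Longrightarrow> runners B ! k = place k -` B"
  by (simp add: runners_def)

lemma place_shift_down: "k < m \<Longrightarrow> place k (q - int N) = place k q - M"
  using place_shift[of k "q - int N"] by simp

lemma runners_inject:
  assumes "runners B = runners B'"
  shows "B = B'"
proof (rule set_eqI)
  fix y
  obtain k q where "k < m" "place k q = y" using place_surj by blast
  then show "y \<in> B \<longleftrightarrow> y \<in> B'" using arg_cong[OF assms, of "\<lambda>L. L ! k"] by auto
qed

lemma runners_move_bead:
  assumes "k0 < m"
  shows "runners (insert (place k0 q') (B - {place k0 q}))
    = (runners B)[k0 := insert q' (runners B ! k0 - {q})]"
proof (rule nth_equalityI)
  fix k assume "k < length (runners (insert (place k0 q') (B - {place k0 q})))"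
  then have k: "k < m" by simp
  have "place k x = place k0 y \<longleftrightarrow> k = k0 \<and> x = y" for x y
    using place_inject[OF k assms] by auto
  then show "runners (insert (place k0 q') (B - {place k0 q})) ! k
      = (runners B)[k0 := insert q' (runners B ! k0 - {q})] ! k"
    using k assms by (cases "k = k0") auto
qed simp

lemma slide_some_runners_iff:
  assumes "\<And>k q. k < m \<Longrightarrow> place k (q + D) = place k q + D'"
  shows "slide_some D m (runners B) L \<longleftrightarrow> (\<exists>B'. slide D' B B' \<and> L = runners B')"
proof
  assume "slide_some D m (runners B) L"
  then obtain k q where k: "k < m" and q: "place k q \<in> B" "place k (q + D) \<notin> B"
    and L: "L = (runners B)[k := insert (q + D) (runners B ! k - {q})]"
    by (auto simp: slide_some_def slide_def)
  then have "slide D' B (insert (place k (q + D)) (B - {place k q}))"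
    using assms[OF k] by (auto simp: slide_def)
  moreover have "L = runners (insert (place k (q + D)) (B - {place k q}))"
    using runners_move_bead[OF k] L by simp
  ultimately show "\<exists>B'. slide D' B B' \<and> L = runners B'" by blast
next
  assume "\<exists>B'. slide D' B B' \<and> L = runners B'"
  then obtain b B' where b: "b \<in> B" "b + D' \<notin> B" and B': "B' = insert (b + D') (B - {b})"
    and L: "L = runners B'" by (auto simp: slide_def)
  obtain k q where k: "k < m" and q: "place k q = b" using place_surj by blast
  have "L = (runners B)[k := insert (q + D) (runners B ! k - {q})]"
    using runners_move_bead[OF k, of "q + D" B q] L B' q assms[OF k] by simp
  moreover have "slide D (runners B ! k) (insert (q + D) (runners B ! k - {q}))"
    using b q k assms[OF k] by (auto simp: slide_def)
  ultimately show "slide_some D m (runners B) L" unfolding slide_some_def using k by blast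
qed

lemma move1_sets_runners_iff: "move1_sets N m (runners B) (runners B') \<longleftrightarrow> move1_set M B B'"
proof -
  have down: "slide_some (- int N) m (runners B) L \<longleftrightarrow> (\<exists>B1. slide (- M) B B1 \<and> L = runners B1)"
    for B L by (rule slide_some_runners_iff) (use place_shift_down in simp)
  have up: "slide_some (int N) m (runners B) L \<longleftrightarrow> (\<exists>B1. slide M B B1 \<and> L = runners B1)"
    for B L by (rule slide_some_runners_iff) (use place_shift in simp)
  have "move1_sets N m (runners B) (runners B')
      \<longleftrightarrow> (\<exists>B1. slide (- M) B B1 \<and> slide_some (int N) m (runners B1) (runners B'))"
    unfolding move1_sets_def down by blast
  also have "\<dots> \<longleftrightarrow> move1_set M B B'"
    unfolding up move1_set_def using runners_inject by blast
  finally show ?thesis .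
qed

lemma is_beta_set_runners: "is_beta_set B \<Longrightarrow> \<forall>B'\<in>set (runners B). is_beta_set B'"
  by (auto simp: runners_def intro!: is_beta_set_vimage[OF place_strict_mono])

lemma runners_UN_image: "runners (\<Union>k<m. place k ` A k) = map A [0..<m]"
proof (rule nth_equalityI)
  fix k assume "k < length (runners (\<Union>k<m. place k ` A k))"
  then have k: "k < m" by simp
  have "q \<in> A k" if mem: "place k q \<in> (\<Union>j<m. place j ` A j)" for q
  proof -
    obtain j x where "j < m" "x \<in> A j" "place k q = place j x" using mem by blast
    then show ?thesis using place_inject[OF k] by blast
  qed
  then have "place k q \<in> (\<Union>j<m. place j ` A j) \<longleftrightarrow> q \<in> A k" for q using k by blast
  then show "runners (\<Union>k<m. place k ` A k) ! k = map A [0..<m] ! k" using k by auto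
qed simp

lemma UN_image_runners: "(\<Union>k<m. place k ` (runners B ! k)) = B"
proof
  show "B \<subseteq> (\<Union>k<m. place k ` (runners B ! k))"
  proof
    fix y assume "y \<in> B"
    moreover obtain k q where "k < m" "place k q = y" using place_surj by blast
    ultimately show "y \<in> (\<Union>k<m. place k ` (runners B ! k))" by auto
  qed
qed auto

lemma is_beta_set_UN_image:
  assumes "\<And>k. k < m \<Longrightarrow> is_beta_set (A k)"
  shows "is_beta_set (\<Union>k<m. place k ` A k)"
proof -
  have ex_lo: "\<forall>k\<in>{..<m}. \<exists>n. \<forall>q\<le>n. q \<in> A k"
    and ex_hi: "\<forall>k\<in>{..<m}. \<exists>n. \<forall>q\<ge>n. q \<notin> A k"
    using assms by (auto simp: is_beta_set_def)
  obtain lo where lo: "\<forall>k\<in>{..<m}. \<forall>q\<le>lo k. q \<in> A k" using bchoice[OF ex_lo] ..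
  obtain hi where hi: "\<forall>k\<in>{..<m}. \<forall>q\<ge>hi k. q \<notin> A k" using bchoice[OF ex_hi] ..
  define L where "L = Min ((\<lambda>k. place k (lo k)) ` {..<m})"
  define U where "U = Max ((\<lambda>k. place k (hi k)) ` {..<m})"
  have "y \<in> (\<Union>k<m. place k ` A k)" if "y \<le> L" for y
  proof -
    obtain k q where k: "k < m" and q: "place k q = y" using place_surj by blast
    have "L \<le> place k (lo k)" unfolding L_def using k by (intro Min_le) auto
    then have "place k q \<le> place k (lo k)" using that q by simp
    then have "q \<le> lo k" using strict_mono_less_eq[OF place_strict_mono[OF k]] by blast
    then show ?thesis using lo k q by blast
  qed
  moreover have "y \<notin> (\<Union>k<m. place k ` A k)" if "U \<le> y" for y
  proof
    assume "y \<in> (\<Union>k<m. place k ` A k)"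
    then obtain k q where k: "k < m" and q: "q \<in> A k" "place k q = y" by blast
    have "place k (hi k) \<le> U" unfolding U_def using k by (intro Max_ge) auto
    then have "place k (hi k) \<le> place k q" using that q by simp
    then have "hi k \<le> q" using strict_mono_less_eq[OF place_strict_mono[OF k]] by blast
    then show False using hi k q by blast
  qed
  ultimately show ?thesis unfolding is_beta_set_def by blast
qed

end

lemma div_mod_unique_int:
  fixes a a' i i' e :: int
  assumes "0 \<le> i" "i < e" "0 \<le> i'" "i' < e" "a * e + i = a' * e + i'"
  shows "a = a' \<and> i = i'"
proof -
  have "(a * e + i) div e = a" "(a * e + i) mod e = i"
    "(a' * e + i') div e = a'" "(a' * e + i') mod e = i'" using assms(1-4) by simp_all
  then show ?thesis using assms(5) by metis
qed

lemma strict_mono_div_mod_scaled: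
  fixes e c :: int
  assumes "0 < e" "e \<le> c"
  shows "strict_mono (\<lambda>x. x div e * c + x mod e)"
proof (rule strict_monoI)
  fix x y :: int assume "x < y"
  then have le: "x div e \<le> y div e" using zdiv_mono1 assms(1) by simp
  show "x div e * c + x mod e < y div e * c + y mod e"
  proof (cases "x div e = y div e")
    case True
    then have "x div e * e = y div e * e" by simp
    then have "x mod e < y mod e"
      using \<open>x < y\<close> div_mult_mod_eq[of x e] div_mult_mod_eq[of y e] by linarith
    then show ?thesis using True by simp
  next
    case False
    then have "(x div e + 1) * c \<le> y div e * c"
      using le assms by (intro mult_right_mono) simp_all
    then have "x div e * c + c \<le> y div e * c" by (simp add: distrib_right)
    moreover have "x mod e < c" using assms pos_mod_bound[OF assms(1), of x] by linarith
    moreover have "0 \<le> y mod e" using assms by simp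
    ultimately show ?thesis by linarith
  qed
qed

lemma residue_class_quotient:
  fixes e i :: int
  assumes "0 \<le> i" "i < e"
  shows "{(b - i) div e | b. b \<in> B \<and> b mod e = i} = (\<lambda>q. q * e + i) -` B"
proof (intro set_eqI iffI)
  fix q assume "q \<in> {(b - i) div e | b. b \<in> B \<and> b mod e = i}"
  then obtain b where b: "b \<in> B" "b mod e = i" "q = (b - i) div e" by blast
  have "b - i = b div e * e" using b(2) div_mult_mod_eq[of b e] by simp
  then have "q = b div e" using b(3) assms by simp
  then have "q * e + i = b" using b(2) div_mult_mod_eq[of b e] by simp
  then show "q \<in> (\<lambda>q. q * e + i) -` B" using b(1) by simp
next
  fix q assume "q \<in> (\<lambda>q. q * e + i) -` B"
  moreover have "(q * e + i) mod e = i" "(q * e + i - i) div e = q" using assms by simp_all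
  ultimately show "q \<in> {(b - i) div e | b. b \<in> B \<and> b mod e = i}" by force
qed

lemma psi_Suc_eq:
  "psi e r (Suc k) q = (q div int e * int r + (int r - 1 - int k)) * int e + q mod int e"
  by (simp add: psi_def algebra_simps)

locale uglov_abacus =
  fixes e r :: nat
  assumes e_pos: "0 < e" and r_pos: "0 < r"
begin

sublocale eta_abacus: abacus_runners "\<lambda>k q. q * int e + int k" e r "int r * int e"
proof
  fix k k' :: nat and q q' :: int
  show "(q + int r) * int e + int k = q * int e + int k + int r * int e"
    by (simp add: algebra_simps)
  assume "k < e" "k' < e" "q * int e + int k = q' * int e + int k'"
  then show "k = k' \<and> q = q'" using div_mod_unique_int[of "int k" "int e" "int k'" q q'] by simp
next
  fix y :: int
  have "y div int e * int e + int (nat (y mod int e)) = y" "nat (y mod int e) < e"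
    using e_pos by (simp_all add: nat_less_iff)
  then show "\<exists>k<e. \<exists>q. q * int e + int k = y" by blast
next
  fix k show "strict_mono (\<lambda>q. q * int e + int k)" using e_pos by (intro strict_monoI) simp
qed

sublocale psi_abacus: abacus_runners "\<lambda>k. psi e r (Suc k)" r e "int r * int e"
proof
  fix k :: nat and q :: int
  have "(q + int e) div int e = q div int e + 1" "(q + int e) mod int e = q mod int e"
    using e_pos by (simp_all add: div_add_self2)
  then show "psi e r (Suc k) (q + int e) = psi e r (Suc k) q + int r * int e"
    unfolding psi_Suc_eq by (simp add: algebra_simps)
next
  fix k k' :: nat and q q' :: int
  assume k: "k < r" "k' < r" and eq: "psi e r (Suc k) q = psi e r (Suc k') q'"
  have outer: "q div int e * int r + (int r - 1 - int k) = q' div int e * int r + (int r - 1 - int k')"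
    and mod: "q mod int e = q' mod int e"
    using div_mod_unique_int[OF _ _ _ _ eq[unfolded psi_Suc_eq]] e_pos by simp_all
  have "q div int e = q' div int e" and "k = k'"
    using div_mod_unique_int[OF _ _ _ _ outer] k by simp_all
  moreover have "q = q div int e * int e + q mod int e" "q' = q' div int e * int e + q' mod int e"
    by simp_all
  ultimately show "k = k' \<and> q = q'" using mod by simp
next
  fix y :: int
  define c where "c = y div int e"
  define k where "k = nat (int r - 1 - c mod int r)"
  have "0 \<le> c mod int r" "c mod int r < int r" using r_pos by simp_all
  then have k: "k < r" "int r - 1 - int k = c mod int r" by (auto simp: k_def)
  define q where "q = c div int r * int e + y mod int e"
  have "q div int e = c div int r" "q mod int e = y mod int e" using e_pos by (simp_all add: q_def)
  then have "psi e r (Suc k) q = y"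
    unfolding psi_Suc_eq k(2) c_def by simp
  then show "\<exists>k<r. \<exists>q. psi e r (Suc k) q = y" using k(1) by blast
next
  fix k
  have "psi e r (Suc k) = (\<lambda>q. (q div int e * (int r * int e) + q mod int e) + (int r - 1 - int k) * int e)"
    unfolding psi_Suc_eq by (simp add: algebra_simps)
  moreover have "strict_mono (\<lambda>q. q div int e * (int r * int e) + q mod int e)"
    using e_pos r_pos by (intro strict_mono_div_mod_scaled) simp_all
  ultimately show "strict_mono (psi e r (Suc k))" by (simp add: strict_mono_def)
qed

lemma eta_eq_config_of_sets: "eta e (l, s) = config_of_sets (eta_abacus.runners (Bset s l))"
  unfolding eta_def config_of_sets_def eta_abacus.runners_def Let_def
  by (simp add: residue_class_quotient)

lemma Psi_eq:
  assumes "in_A r X"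
  shows "Psi e r X = pair_of (\<Union>k<r. psi e r (Suc k) ` (bsets X ! k))"
proof -
  have "(\<Union>k\<in>{1..r}. psi e r k ` Bset (snd X ! (k - 1)) (fst X ! (k - 1)))
      = (\<Union>k<r. psi e r (Suc k) ` Bset (snd X ! k) (fst X ! k))"
    unfolding image_Suc_lessThan[symmetric] by (simp add: image_image)
  then show ?thesis using assms by (simp add: Psi_def bsets_def in_A_def)
qed

lemma Psi_eq_iff_bsets:
  assumes "in_A r X" "is_part l"
  shows "Psi e r X = (l, s) \<longleftrightarrow> bsets X = psi_abacus.runners (Bset s l)"
proof -
  let ?U = "\<Union>k<r. psi e r (Suc k) ` (bsets X ! k)"
  have len: "length (bsets X) = r" using assms(1) by (simp add: bsets_def in_A_def)
  have "is_beta_set ?U"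
    using len by (intro psi_abacus.is_beta_set_UN_image) (simp add: bsets_def is_beta_set_Bset)
  then have "pair_of ?U = (l, s) \<longleftrightarrow> ?U = Bset s l"
    using Bset_pair_of(2)[of ?U] pair_of_Bset[OF assms(2)] by (metis fst_conv snd_conv)
  also have "\<dots> \<longleftrightarrow> bsets X = psi_abacus.runners (Bset s l)"
  proof
    have "map (\<lambda>k. bsets X ! k) [0..<r] = bsets X" using len map_nth by metis
    then show "?U = Bset s l \<Longrightarrow> bsets X = psi_abacus.runners (Bset s l)"
      using psi_abacus.runners_UN_image[of "\<lambda>k. bsets X ! k"] by simp
  next
    assume "bsets X = psi_abacus.runners (Bset s l)"
    then show "?U = Bset s l" using psi_abacus.UN_image_runners[of "Bset s l"] by (simp only:)
  qed
  finally show ?thesis by (simp add: Psi_eq[OF assms(1)])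
qed

lemma Phi_eq_config_of_sets:
  assumes "is_part l"
  shows "Phi e r (l, s) = config_of_sets (psi_abacus.runners (Bset s l))"
  unfolding Phi_def
proof (rule the_equality)
  let ?L = "psi_abacus.runners (Bset s l)"
  have beta: "\<forall>B\<in>set ?L. is_beta_set B"
    by (rule psi_abacus.is_beta_set_runners[OF is_beta_set_Bset])
  show "in_A r (config_of_sets ?L) \<and> Psi e r (config_of_sets ?L) = (l, s)"
    using in_A_config_of_sets[OF beta] bsets_config_of_sets[OF beta] Psi_eq_iff_bsets[OF _ assms]
    by simp
  show "X = config_of_sets ?L" if "in_A r X \<and> Psi e r X = (l, s)" for X
    using that config_of_sets_bsets Psi_eq_iff_bsets[OF _ assms] by metis
qed

end

theorem lemma2p11:
  fixes e r :: nat and lam mu :: partition and s :: int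
  assumes "2 \<le> e" and "2 \<le> r"
    and "is_part lam" and "is_part mu"
    and "sim_e e lam mu"
  shows "move1 r e (eta e (lam, s)) (eta e (mu, s)) \<longleftrightarrow>
         move1 e r (Phi e r (lam, s)) (Phi e r (mu, s))"
proof -
  interpret uglov_abacus e r using assms(1,2) by unfold_locales simp_all
  have "move1 r e (eta e (lam, s)) (eta e (mu, s))
      \<longleftrightarrow> move1_set (int r * int e) (Bset s lam) (Bset s mu)"
    unfolding eta_eq_config_of_sets eta_abacus.move1_sets_runners_iff[symmetric]
    by (rule move1_config_of_sets_iff) (simp_all add: eta_abacus.is_beta_set_runners[OF is_beta_set_Bset])
  moreover have "move1 e r (Phi e r (lam, s)) (Phi e r (mu, s))
      \<longleftrightarrow> move1_set (int r * int e) (Bset s lam) (Bset s mu)"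
    unfolding Phi_eq_config_of_sets[OF assms(3)] Phi_eq_config_of_sets[OF assms(4)]
      psi_abacus.move1_sets_runners_iff[symmetric]
    by (rule move1_config_of_sets_iff) (simp_all add: psi_abacus.is_beta_set_runners[OF is_beta_set_Bset])
  ultimately show ?thesis by simp
qed

end
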